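(* Let $P$ be a transition kernel on a space with countably generated $\sigma$-algebra, reversible with respect to a probability measure $\mu$ and nonnegative definite (i.e. $(Pf,f)_\mu\ge0$ for all $f\in L_2(\mu)$). Let $\{A_1,\dots,A_J\}$ be a partition of the state space with $\mu(A_j)>0$ for all $j$. Then $$\tfrac12\,\mathrm{Gap}(\bar P)\min_{j=1,\dots,J}\mathrm{Gap}(P|_{A_j})\;\le\;\mathrm{Gap}(P)\;\le\;\mathrm{Gap}(\bar P).$$
   Context: Spectral gap of a $\mu$-reversible kernel: $\mathrm{Gap}(P)=\inf\{(f,(I-P)f)_\mu/\mathrm{Var}_\mu(f): f\in L_2(\mu),\ \mathrm{Var}_\mu(f)>0\}$, with $(f,g)_\mu=\int fg\,d\mu$. Restriction: $P|_A(x,B)=P(x,B)+\mathbf{1}_B(x)P(x,A^c)$ for $x\in A$, $B\subset A$, which is reversible w.r.t. $\mu$ restricted and normalized to $A$. Projection matrix: $\bar P(i,j)=\frac{1}{\mu(A_i)}\int_{A_i}\int_{A_j}P(x,dy)\mu(dx)$ on $\{1,\dots,J\}$, reversible w.r.t. $(\mu(A_j))_j$. *)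

theory Defs
  imports "HOL-Probability.Probability"
begin

definition countably_generated :: "'a measure \<Rightarrow> bool" where
  "countably_generated M \<longleftrightarrow>
     (\<exists>G. countable G \<and> G \<subseteq> Pow (space M) \<and> sets M = sigma_sets (space M) G)"

definition markov_kernel :: "'a measure \<Rightarrow> ('a \<Rightarrow> 'a measure) \<Rightarrow> bool" where
  "markov_kernel M K \<longleftrightarrow> K \<in> M \<rightarrow>\<^sub>M prob_algebra M"

definition reversible :: "'a measure \<Rightarrow> ('a \<Rightarrow> 'a measure) \<Rightarrow> bool" where
  "reversible M K \<longleftrightarrow> (\<forall>A\<in>sets M. \<forall>B\<in>sets M.
     (LINT x:A|M. measure (K x) B) = (LINT x:B|M. measure (K x) A))"

definition L2 :: "'a measure \<Rightarrow> ('a \<Rightarrow> real) set" where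
  "L2 M = {f. f \<in> borel_measurable M \<and> integrable M (\<lambda>x. (f x)\<^sup>2)}"

definition inner_mu :: "'a measure \<Rightarrow> ('a \<Rightarrow> real) \<Rightarrow> ('a \<Rightarrow> real) \<Rightarrow> real" where
  "inner_mu M f g = (LINT x|M. f x * g x)"

definition kernel_apply :: "('a \<Rightarrow> 'a measure) \<Rightarrow> ('a \<Rightarrow> real) \<Rightarrow> 'a \<Rightarrow> real" where
  "kernel_apply K f x = (LINT y|K x. f y)"

definition var_mu :: "'a measure \<Rightarrow> ('a \<Rightarrow> real) \<Rightarrow> real" where
  "var_mu M f = inner_mu M f f - (LINT x|M. f x)\<^sup>2"

definition nonneg_definite :: "'a measure \<Rightarrow> ('a \<Rightarrow> 'a measure) \<Rightarrow> bool" where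
  "nonneg_definite M K \<longleftrightarrow> (\<forall>f\<in>L2 M. inner_mu M (kernel_apply K f) f \<ge> 0)"

(* Spectral gap. Convention: if no f in L2 has positive variance (mu is a point mass),
   the infimum is over the empty set; we then set Gap = 1. *)
definition gap :: "'a measure \<Rightarrow> ('a \<Rightarrow> 'a measure) \<Rightarrow> real" where
  "gap M K = (let S = {(inner_mu M f f - inner_mu M f (kernel_apply K f)) / var_mu M f
                       | f. f \<in> L2 M \<and> var_mu M f > 0}
              in if S = {} then 1 else Inf S)"

(* It is regarded as a kernel on the whole space (outside A it is the identity, which is
   irrelevant since the normalised restriction of mu, uniform_measure M A, vanishes there). *)
definition restrict_kernel :: "'a measure \<Rightarrow> ('a \<Rightarrow> 'a measure) \<Rightarrow> 'a set \<Rightarrow> 'a \<Rightarrow> 'a measure" where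
  "restrict_kernel M K A x = measure_of (space M) (sets M)
     (\<lambda>B. if x \<in> A then emeasure (K x) (B \<inter> A) + indicator B x * emeasure (K x) (space M - A)
          else indicator B x)"

definition proj_matrix :: "'a measure \<Rightarrow> ('a \<Rightarrow> 'a measure) \<Rightarrow> (nat \<Rightarrow> 'a set) \<Rightarrow> nat \<Rightarrow> nat \<Rightarrow> real" where
  "proj_matrix M K A i j = (LINT x:A i|M. measure (K x) (A j)) / measure M (A i)"

definition proj_kernel :: "'a measure \<Rightarrow> ('a \<Rightarrow> 'a measure) \<Rightarrow> (nat \<Rightarrow> 'a set) \<Rightarrow> nat \<Rightarrow> nat \<Rightarrow> nat measure" where
  "proj_kernel M K A J i = point_measure {..<J} (\<lambda>j. ennreal (proj_matrix M K A i j))"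

definition proj_measure :: "'a measure \<Rightarrow> (nat \<Rightarrow> 'a set) \<Rightarrow> nat \<Rightarrow> nat measure" where
  "proj_measure M A J = point_measure {..<J} (\<lambda>j. emeasure M (A j))"

end

theory Submission
  imports Defs
begin

(* The Dirichlet form E(f) = (f,f) - (f,Pf) is written as an integral over the
   stationary flow  flow(dx,dy) = mu(dx) P(x,dy),  E(f) = 1/2 int (f x - f y)^2 dflow,
   which is symmetric by reversibility.  Splitting pairs (x,y) into those inside one block
   and those crossing blocks gives E(f) = e + d.  Writing f = h + block_fun m with m the
   block means, Var(f) = a + b with a = sum_j mu(A_j) Var_j(f) (within-block variance) and
   b = the variance of m under the projection chain.  Then
     min_j Gap(P|A_j) * a <= e                 (the restricted chains, block by block),
     Gap(Pbar) * b <= E(block_fun m)           (the projection chain),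
     e + (crossing part of E(h)) <= a          (nonnegative definiteness of P),
   and an elementary convexity inequality combines these into the lower bound.
   The upper bound holds because block functions realise the projection chain exactly. *)

definition dirichlet :: "'a measure \<Rightarrow> ('a \<Rightarrow> 'a measure) \<Rightarrow> ('a \<Rightarrow> real) \<Rightarrow> real" where
  "dirichlet N Q f = inner_mu N f f - inner_mu N f (kernel_apply Q f)"

definition dirichlet_bounded :: "'a measure \<Rightarrow> ('a \<Rightarrow> 'a measure) \<Rightarrow> bool" where
  "dirichlet_bounded N Q \<longleftrightarrow>
     (\<forall>f\<in>L2 N. 0 \<le> dirichlet N Q f \<and> dirichlet N Q f \<le> var_mu N f)"

definition gap_ratios :: "'a measure \<Rightarrow> ('a \<Rightarrow> 'a measure) \<Rightarrow> real set" where
  "gap_ratios N Q = {dirichlet N Q f / var_mu N f | f. f \<in> L2 N \<and> var_mu N f > 0}"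

lemma gap_eq: "gap N Q = (if gap_ratios N Q = {} then 1 else Inf (gap_ratios N Q))"
  unfolding gap_def gap_ratios_def dirichlet_def Let_def by simp

lemma gap_ratios_bounds:
  assumes "dirichlet_bounded N Q" and "s \<in> gap_ratios N Q"
  shows "0 \<le> s \<and> s \<le> 1"
  using assms unfolding gap_ratios_def dirichlet_bounded_def by (auto simp: divide_le_eq_1)

lemma gap_nonneg: "dirichlet_bounded N Q \<Longrightarrow> 0 \<le> gap N Q"
  by (auto simp: gap_eq intro: cInf_greatest dest: gap_ratios_bounds)

lemma gap_le_one: "dirichlet_bounded N Q \<Longrightarrow> gap N Q \<le> 1"
proof (cases "gap_ratios N Q = {}")
  case False
  assume bdd: "dirichlet_bounded N Q"
  then obtain s where "s \<in> gap_ratios N Q" using False by blast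
  then have "Inf (gap_ratios N Q) \<le> s" "s \<le> 1"
    using gap_ratios_bounds[OF bdd] by (auto intro!: cInf_lower bdd_belowI)
  then show ?thesis using False by (simp add: gap_eq)
qed (simp add: gap_eq)

lemma gap_mult_var_le:
  assumes bdd: "dirichlet_bounded N Q" and f: "f \<in> L2 N"
  shows "gap N Q * var_mu N f \<le> dirichlet N Q f"
proof (cases "var_mu N f > 0")
  case True
  then have s: "dirichlet N Q f / var_mu N f \<in> gap_ratios N Q"
    using f unfolding gap_ratios_def by blast
  then have "gap N Q \<le> dirichlet N Q f / var_mu N f"
    using gap_ratios_bounds[OF bdd] by (auto simp: gap_eq intro!: cInf_lower bdd_belowI)
  then show ?thesis using True by (simp add: le_divide_eq)
next
  case False
  then have "var_mu N f = 0" "dirichlet N Q f = 0"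
    using bdd f unfolding dirichlet_bounded_def by force+
  then show ?thesis by simp
qed

lemma le_gapI:
  assumes "c \<le> 1"
    and "\<And>f. f \<in> L2 N \<Longrightarrow> var_mu N f > 0 \<Longrightarrow> c * var_mu N f \<le> dirichlet N Q f"
  shows "c \<le> gap N Q"
  using assms unfolding gap_eq gap_ratios_def
  by (auto simp: le_divide_eq intro!: cInf_greatest)

lemma L2D:
  assumes "f \<in> L2 N" shows "f \<in> borel_measurable N" "integrable N (\<lambda>x. (f x)\<^sup>2)"
  using assms unfolding L2_def by auto

lemma abs_mult_le_sq: "\<bar>a * b\<bar> \<le> a\<^sup>2 + (b::real)\<^sup>2"
proof -
  have "0 \<le> (\<bar>a\<bar> - \<bar>b\<bar>)\<^sup>2" by simp
  then have "2 * \<bar>a\<bar> * \<bar>b\<bar> \<le> a\<^sup>2 + b\<^sup>2" by (simp add: power2_eq_square algebra_simps)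
  moreover have "0 \<le> \<bar>a\<bar> * \<bar>b\<bar>" by simp
  ultimately have "\<bar>a\<bar> * \<bar>b\<bar> \<le> a\<^sup>2 + b\<^sup>2" by linarith
  then show ?thesis by (simp add: abs_mult)
qed

lemma L2_mult_integrable:
  assumes f: "f \<in> L2 N" and g: "g \<in> L2 N"
  shows "integrable N (\<lambda>x. f x * g x)"
proof (rule Bochner_Integration.integrable_bound)
  show "integrable N (\<lambda>x. (f x)\<^sup>2 + (g x)\<^sup>2)" using L2D[OF f] L2D[OF g] by simp
  show "(\<lambda>x. f x * g x) \<in> borel_measurable N" using L2D[OF f] L2D[OF g] by simp
  show "AE x in N. norm (f x * g x) \<le> norm ((f x)\<^sup>2 + (g x)\<^sup>2)"
    using abs_mult_le_sq by auto
qed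

lemma L2_diff:
  assumes f: "f \<in> L2 N" and g: "g \<in> L2 N"
  shows "(\<lambda>x. f x - g x) \<in> L2 N"
proof -
  have "integrable N (\<lambda>x. (f x)\<^sup>2 + (g x)\<^sup>2 - 2 * (f x * g x))"
    using L2D(2)[OF f] L2D(2)[OF g] L2_mult_integrable[OF f g] by simp
  then show ?thesis using L2D(1)[OF f] L2D(1)[OF g] unfolding L2_def
    by (simp add: power2_diff algebra_simps)
qed

lemma (in prob_space) L2_const: "(\<lambda>_. c) \<in> L2 M"
  unfolding L2_def by simp

lemma (in prob_space) L2_integrable: "f \<in> L2 M \<Longrightarrow> integrable M f"
  using square_integrable_imp_integrable L2D by blast

lemma (in prob_space) inner_centered:
  assumes f: "f \<in> L2 M"
  defines "c \<equiv> integral\<^sup>L M f"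
  shows "inner_mu M (\<lambda>x. f x - c) (\<lambda>x. f x - c) = var_mu M f"
proof -
  have "inner_mu M (\<lambda>x. f x - c) (\<lambda>x. f x - c) = (\<integral>x. (f x)\<^sup>2 - 2 * c * f x + c\<^sup>2 \<partial>M)"
    unfolding inner_mu_def by (simp add: power2_eq_square algebra_simps)
  also have "\<dots> = (\<integral>x. (f x)\<^sup>2 \<partial>M) - 2 * c * c + c\<^sup>2"
    using L2D(2)[OF f] L2_integrable[OF f] by (simp add: c_def prob_space)
  also have "\<dots> = var_mu M f"
    unfolding var_mu_def inner_mu_def c_def by (simp add: power2_eq_square)
  finally show ?thesis .
qed

(* The elementary inequality that combines the four estimates of the lower bound.
   Here a, b are the within- and between-block variances, e, d the within- and
   crossing parts of E(f), dh the crossing part of E(h), EG = E(block means),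
   gm = min block gap, g = projection gap.  F5 is the convexity estimate for all t. *)
lemma gap_combination_inequality:
  fixes g gm a b e d dh EG :: real
  assumes "0 \<le> g" "g \<le> 1" "0 \<le> gm" "gm \<le> 1" "0 \<le> d" "0 \<le> dh" "0 \<le> e"
    and F2: "e + dh \<le> a" and F3: "g * b \<le> EG" and F4: "gm * a \<le> e"
    and F5: "\<And>t. t * (1 - t) * EG \<le> (1 - t) * d + t * dh"
  shows "g * gm / 2 * (a + b) \<le> e + d"
proof (cases "gm < 1")
  case True
  have a0: "0 \<le> a" using assms by linarith
  have p: "0 \<le> gm * (1 - gm)" using assms by simp
  have 1: "gm * (1 - gm) * EG \<le> (1 - gm) * d + gm * dh" using F5[of gm] by (simp add: mult.commute)
  have 2: "gm * (1 - gm) * (g * b) \<le> gm * (1 - gm) * EG" using mult_left_mono[OF F3 p] .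
  have 3: "gm * dh \<le> gm * (a - e)" using F2 assms by (intro mult_left_mono) auto
  have 4: "gm * (a - e) \<le> (1 - gm) * e" using F4 by (simp add: algebra_simps)
  have 5: "(1 - gm) * (g * (gm * a)) \<le> (1 - gm) * (1 * (gm * a))"
    using assms True a0 by (intro mult_left_mono mult_right_mono) auto
  have 6: "(1 - gm) * (gm * a) \<le> (1 - gm) * e" using F4 True by (intro mult_left_mono) auto
  have 7: "0 \<le> (1 - gm) * d" using assms by simp
  have "(1 - gm) * (g * gm * (a + b)) = (1 - gm) * (g * (gm * a)) + gm * (1 - gm) * (g * b)"
    by (simp add: algebra_simps)
  also have "\<dots> \<le> (1 - gm) * e + ((1 - gm) * d + gm * dh)" using 1 2 5 6 by linarith
  also have "\<dots> \<le> (1 - gm) * (2 * (e + d))" using 3 4 7 by (simp add: algebra_simps)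
  finally have "(1 - gm) * (g * gm * (a + b)) \<le> (1 - gm) * (2 * (e + d))" .
  then show ?thesis using True by simp
next
  case False
  then have gm1: "gm = 1" using assms by simp
  then have "dh = 0" using F2 F4 assms by simp
  then have "EG \<le> 2 * d" using F5[of "1/2"] by simp
  have "g * a \<le> a" using assms mult_right_mono[of g 1 a] by simp
  moreover have "a \<le> e" using F4 gm1 by simp
  ultimately show ?thesis using F3 \<open>EG \<le> 2 * d\<close> gm1 assms by (simp add: algebra_simps)
qed

locale prob_kernel = prob_space M for M :: "'a measure" +
  fixes K :: "'a \<Rightarrow> 'a measure"
  assumes markov: "markov_kernel M K"
begin

lemma K_meas[measurable]: "K \<in> M \<rightarrow>\<^sub>M subprob_algebra M"
  using markov unfolding markov_kernel_def by (rule measurable_prob_algebraD)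

lemma K_prob: "x \<in> space M \<Longrightarrow> prob_space (K x)"
  using markov unfolding markov_kernel_def by (auto dest: measurable_space simp: space_prob_algebra)

lemma K_sets: "x \<in> space M \<Longrightarrow> sets (K x) = sets M"
  using markov unfolding markov_kernel_def by (auto dest: measurable_space simp: space_prob_algebra)

lemma K_space: "x \<in> space M \<Longrightarrow> space (K x) = space M"
  using K_sets sets_eq_imp_space_eq by blast

lemma Pair_meas: "x \<in> space M \<Longrightarrow> Pair x \<in> K x \<rightarrow>\<^sub>M M \<Otimes>\<^sub>M M"
  by (subst measurable_cong_sets[OF K_sets refl], assumption) simp

lemma measure_K_meas[measurable]: "B \<in> sets M \<Longrightarrow> (\<lambda>x. measure (K x) B) \<in> borel_measurable M"
  using measure_measurable_subprob_algebra2[of M "\<lambda>x. B" M K] by simp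

lemma Pair_kernel_meas[measurable]:
  "(\<lambda>x. distr (K x) (M \<Otimes>\<^sub>M M) (Pair x)) \<in> M \<rightarrow>\<^sub>M subprob_algebra (M \<Otimes>\<^sub>M M)"
  by (rule measurable_distr2[where M=M]) (simp_all add: case_prod_beta' K_meas)

(* The stationary flow mu(dx) P(x,dy): the law of two consecutive states. *)
definition flow :: "('a \<times> 'a) measure" where
  "flow = M \<bind> (\<lambda>x. distr (K x) (M \<Otimes>\<^sub>M M) (Pair x))"

lemma sets_flow[measurable_cong]: "sets flow = sets (M \<Otimes>\<^sub>M M)"
  unfolding flow_def using not_empty
  by (subst sets_bind[where N="M \<Otimes>\<^sub>M M"])
     (auto intro: measurable_space[OF Pair_kernel_meas] simp: space_subprob_algebra)

lemma space_flow: "space flow = space M \<times> space M"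
  by (simp add: sets_eq_imp_space_eq[OF sets_flow] space_pair_measure)

lemma flow_meas_iff: "f \<in> flow \<rightarrow>\<^sub>M N \<longleftrightarrow> f \<in> M \<Otimes>\<^sub>M M \<rightarrow>\<^sub>M N"
  by (simp add: measurable_cong_sets[OF sets_flow refl])

lemma flow_prob: "prob_space flow"
  unfolding flow_def
proof (rule prob_space_bind[OF _ Pair_kernel_meas])
  show "AE x in M. prob_space (distr (K x) (M \<Otimes>\<^sub>M M) (Pair x))"
    by (intro AE_I2 prob_space.prob_space_distr K_prob Pair_meas)
qed

lemma nn_integral_flow:
  assumes [measurable]: "F \<in> borel_measurable (M \<Otimes>\<^sub>M M)"
  shows "(\<integral>\<^sup>+z. F z \<partial>flow) = (\<integral>\<^sup>+x. \<integral>\<^sup>+y. F (x,y) \<partial>K x \<partial>M)"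
  unfolding flow_def
  by (subst nn_integral_bind[where B="M \<Otimes>\<^sub>M M"])
     (auto intro!: nn_integral_cong simp: nn_integral_distr Pair_meas)

lemma emeasure_flow_rect:
  assumes A: "A \<in> sets M" and B: "B \<in> sets M"
  shows "emeasure flow (A \<times> B) = ennreal (LINT x:A|M. measure (K x) B)"
proof -
  have "emeasure flow (A \<times> B) = (\<integral>\<^sup>+z. indicator (A \<times> B) z \<partial>flow)"
    using A B by (simp add: sets_flow)
  also have "\<dots> = (\<integral>\<^sup>+x. \<integral>\<^sup>+y. indicator (A \<times> B) (x,y) \<partial>K x \<partial>M)"
    using A B by (subst nn_integral_flow) auto
  also have "\<dots> = (\<integral>\<^sup>+x. ennreal (indicator A x * measure (K x) B) \<partial>M)"
  proof (rule nn_integral_cong)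
    fix x assume x: "x \<in> space M"
    interpret Q: prob_space "K x" by (rule K_prob[OF x])
    have "(\<integral>\<^sup>+y. indicator (A \<times> B) (x,y) \<partial>K x) = (\<integral>\<^sup>+y. indicator A x * indicator B y \<partial>K x)"
      by (auto intro!: nn_integral_cong simp: indicator_def)
    also have "\<dots> = indicator A x * emeasure (K x) B"
      using B x by (subst nn_integral_cmult_indicator) (auto simp: K_sets)
    finally show "(\<integral>\<^sup>+y. indicator (A \<times> B) (x,y) \<partial>K x) = ennreal (indicator A x * measure (K x) B)"
      by (simp add: Q.emeasure_eq_measure ennreal_mult' indicator_def)
  qed
  also have "\<dots> = ennreal (integral\<^sup>L M (\<lambda>x. indicator A x * measure (K x) B))"
  proof (rule nn_integral_eq_integral)
    show "integrable M (\<lambda>x. indicator A x * measure (K x) B)"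
    proof (rule integrable_const_bound[where B=1])
      show "AE x in M. norm (indicator A x * measure (K x) B) \<le> 1"
        using prob_space.prob_le_1[OF K_prob] by (auto simp: indicator_def)
    qed (use A B in simp)
  qed auto
  finally show ?thesis by (simp add: set_lebesgue_integral_def)
qed

lemma integral_K_meas:
  fixes H :: "'a \<times> 'a \<Rightarrow> real"
  assumes H[measurable]: "H \<in> borel_measurable (M \<Otimes>\<^sub>M M)"
  shows "(\<lambda>x. \<integral>y. H (x,y) \<partial>K x) \<in> borel_measurable M"
proof -
  have "(\<lambda>x. integral\<^sup>L (distr (K x) (M \<Otimes>\<^sub>M M) (Pair x)) H) \<in> borel_measurable M"
    by (rule measurable_compose[OF Pair_kernel_meas integral_measurable_subprob_algebra[OF H]])
  then show ?thesis
    by (rule measurable_cong[THEN iffD1, rotated]) (simp add: integral_distr[OF Pair_meas H])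
qed

lemma nn_integral_K_meas:
  fixes H :: "'a \<times> 'a \<Rightarrow> real"
  assumes H[measurable]: "H \<in> borel_measurable (M \<Otimes>\<^sub>M M)"
  shows "(\<lambda>x. \<integral>\<^sup>+y. ennreal (H (x,y)) \<partial>K x) \<in> borel_measurable M"
  using nn_integral_measurable_subprob_algebra2[of "\<lambda>x y. ennreal (H (x,y))" M M K] by simp

lemma positive_part_flow_finite:
  fixes H :: "'a \<times> 'a \<Rightarrow> real"
  assumes H[measurable]: "H \<in> borel_measurable (M \<Otimes>\<^sub>M M)" and int: "integrable flow H"
  shows "(\<integral>\<^sup>+x. \<integral>\<^sup>+y. ennreal (H (x,y)) \<partial>K x \<partial>M) < \<top>"
proof -
  have "(\<integral>\<^sup>+x. \<integral>\<^sup>+y. ennreal (H (x,y)) \<partial>K x \<partial>M) = (\<integral>\<^sup>+z. ennreal (H z) \<partial>flow)"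
    by (rule nn_integral_flow[symmetric]) simp
  also have "\<dots> \<le> (\<integral>\<^sup>+z. ennreal (norm (H z)) \<partial>flow)"
    by (intro nn_integral_mono) (simp add: ennreal_leI)
  also have "\<dots> < \<top>"
    using int by (simp add: integrable_iff_bounded)
  finally show ?thesis .
qed

lemma integral_section_parts:
  fixes H :: "'a \<times> 'a \<Rightarrow> real"
  assumes H[measurable]: "H \<in> borel_measurable (M \<Otimes>\<^sub>M M)" and x: "x \<in> space M"
    and P: "(\<integral>\<^sup>+y. ennreal (H (x,y)) \<partial>K x) \<noteq> \<top>"
    and N: "(\<integral>\<^sup>+y. ennreal (- H (x,y)) \<partial>K x) \<noteq> \<top>"
  shows "(\<integral>y. H (x,y) \<partial>K x) =
    enn2real (\<integral>\<^sup>+y. ennreal (H (x,y)) \<partial>K x) - enn2real (\<integral>\<^sup>+y. ennreal (- H (x,y)) \<partial>K x)"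
proof -
  have [measurable]: "(\<lambda>y. H (x,y)) \<in> borel_measurable (K x)"
    using measurable_compose[OF Pair_meas[OF x] H] by (simp add: comp_def)
  have "(\<integral>\<^sup>+y. ennreal (norm (H (x,y))) \<partial>K x) =
      (\<integral>\<^sup>+y. ennreal (H (x,y)) \<partial>K x) + (\<integral>\<^sup>+y. ennreal (- H (x,y)) \<partial>K x)"
    by (subst nn_integral_add[symmetric]) (auto intro!: nn_integral_cong simp: ennreal_neg abs_real_def)
  then have "integrable (K x) (\<lambda>y. H (x,y))"
    using P N by (simp add: integrable_iff_bounded less_top)
  then show ?thesis by (rule real_lebesgue_integral_def)
qed

lemma integral_flow:
  fixes H :: "'a \<times> 'a \<Rightarrow> real"
  assumes H[measurable]: "H \<in> borel_measurable (M \<Otimes>\<^sub>M M)" and int: "integrable flow H"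
  shows "integral\<^sup>L flow H = (\<integral>x. (\<integral>y. H (x,y) \<partial>K x) \<partial>M)"
proof -
  define Pp where "Pp x = (\<integral>\<^sup>+y. ennreal (H (x,y)) \<partial>K x)" for x
  define Nn where "Nn x = (\<integral>\<^sup>+y. ennreal (- H (x,y)) \<partial>K x)" for x
  have [measurable]: "Pp \<in> borel_measurable M" "Nn \<in> borel_measurable M"
    unfolding Pp_def Nn_def using nn_integral_K_meas[of "\<lambda>z. - H z"] by (auto intro: nn_integral_K_meas)
  have finP: "(\<integral>\<^sup>+x. Pp x \<partial>M) < \<top>"
    unfolding Pp_def by (rule positive_part_flow_finite[OF H int])
  have finN: "(\<integral>\<^sup>+x. Nn x \<partial>M) < \<top>"
    unfolding Nn_def using positive_part_flow_finite[of "\<lambda>z. - H z"] int by simp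
  have aeP: "AE x in M. Pp x \<noteq> \<infinity>"
    using finP by (intro nn_integral_PInf_AE) (auto simp: top_unique)
  have aeN: "AE x in M. Nn x \<noteq> \<infinity>"
    using finN by (intro nn_integral_PInf_AE) (auto simp: top_unique)
  have ae: "AE x in M. (\<integral>y. H (x,y) \<partial>K x) = enn2real (Pp x) - enn2real (Nn x)"
    using aeP aeN AE_space
    by eventually_elim (simp add: Pp_def Nn_def integral_section_parts)
  have eqP: "(\<integral>\<^sup>+x. ennreal (enn2real (Pp x)) \<partial>M) = (\<integral>\<^sup>+x. Pp x \<partial>M)"
    using aeP by (intro nn_integral_cong_AE) (auto elim!: eventually_mono simp: less_top)
  have eqN: "(\<integral>\<^sup>+x. ennreal (enn2real (Nn x)) \<partial>M) = (\<integral>\<^sup>+x. Nn x \<partial>M)"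
    using aeN by (intro nn_integral_cong_AE) (auto elim!: eventually_mono simp: less_top)
  have intP: "integrable M (\<lambda>x. enn2real (Pp x))" and intN: "integrable M (\<lambda>x. enn2real (Nn x))"
    by (intro integrableI_bounded; simp add: eqP eqN finP finN)+
  have "(\<integral>x. (\<integral>y. H (x,y) \<partial>K x) \<partial>M) = (\<integral>x. enn2real (Pp x) - enn2real (Nn x) \<partial>M)"
    by (rule integral_cong_AE) (auto simp: integral_K_meas[OF H] ae)
  also have "\<dots> = enn2real (\<integral>\<^sup>+x. Pp x \<partial>M) - enn2real (\<integral>\<^sup>+x. Nn x \<partial>M)"
    using intP intN by (simp add: integral_eq_nn_integral eqP eqN)
  also have "\<dots> = integral\<^sup>L flow H"
    by (simp add: real_lebesgue_integral_def[OF int] Pp_def Nn_def nn_integral_flow)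
  finally show ?thesis ..
qed

lemma integral_flow_fst:
  fixes F :: "'a \<Rightarrow> real"
  assumes int: "integrable M F"
  shows "integrable flow (\<lambda>z. F (fst z))" "integral\<^sup>L flow (\<lambda>z. F (fst z)) = integral\<^sup>L M F"
proof -
  have F[measurable]: "F \<in> borel_measurable M" using int by auto
  have m: "(\<lambda>z. F (fst z)) \<in> borel_measurable (M \<Otimes>\<^sub>M M)" by measurable
  have "(\<integral>\<^sup>+z. ennreal (norm (F (fst z))) \<partial>flow) = (\<integral>\<^sup>+x. ennreal (norm (F x)) \<partial>M)"
    by (simp add: nn_integral_flow prob_space.emeasure_space_1[OF K_prob] cong: nn_integral_cong)
  then show i: "integrable flow (\<lambda>z. F (fst z))"
    using int unfolding integrable_iff_bounded by (simp add: flow_meas_iff)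
  have "integral\<^sup>L flow (\<lambda>z. F (fst z)) = (\<integral>x. (\<integral>y. F x \<partial>K x) \<partial>M)"
    using integral_flow[OF m i] by simp
  also have "\<dots> = integral\<^sup>L M F"
    by (intro Bochner_Integration.integral_cong refl) (simp add: prob_space.prob_space[OF K_prob])
  finally show "integral\<^sup>L flow (\<lambda>z. F (fst z)) = integral\<^sup>L M F" .
qed

end

locale reversible_kernel = prob_kernel +
  assumes rev: "reversible M K" and nnd: "nonneg_definite M K"
begin

(* Reversibility says exactly that the flow is invariant under swapping the two states;
   it suffices to check this on rectangles. *)
lemma flow_swap: "distr flow (M \<Otimes>\<^sub>M M) (\<lambda>(x,y). (y,x)) = flow"
proof (rule measure_eqI_generator_eq[OF Int_stable_pair_measure_generator[of M M],
      where \<Omega>="space M \<times> space M" and A="\<lambda>_. space M \<times> space M"])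
  show "{a \<times> b |a b. a \<in> sets M \<and> b \<in> sets M} \<subseteq> Pow (space M \<times> space M)"
    using sets.sets_into_space by fastforce
  fix X assume "X \<in> {a \<times> b |a b. a \<in> sets M \<and> b \<in> sets M}"
  then obtain A B where X: "X = A \<times> B" and A: "A \<in> sets M" and B: "B \<in> sets M" by blast
  have "(\<lambda>(x,y). (y,x)) -` X \<inter> space flow = B \<times> A"
    using sets.sets_into_space[OF A] sets.sets_into_space[OF B] by (auto simp: X space_flow)
  then have "emeasure (distr flow (M \<Otimes>\<^sub>M M) (\<lambda>(x,y). (y,x))) X = emeasure flow (B \<times> A)"
    using A B by (subst emeasure_distr) (auto simp: X flow_meas_iff)
  also have "\<dots> = emeasure flow X"
    using rev A B unfolding reversible_def X by (simp add: emeasure_flow_rect)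
  finally show "emeasure (distr flow (M \<Otimes>\<^sub>M M) (\<lambda>(x,y). (y,x))) X = emeasure flow X" .
next
  show "sets (distr flow (M \<Otimes>\<^sub>M M) (\<lambda>(x,y). (y,x)))
      = sigma_sets (space M \<times> space M) {a \<times> b |a b. a \<in> sets M \<and> b \<in> sets M}"
    by (simp add: sets_pair_measure)
  show "sets flow = sigma_sets (space M \<times> space M) {a \<times> b |a b. a \<in> sets M \<and> b \<in> sets M}"
    by (simp add: sets_flow sets_pair_measure)
  interpret F: prob_space flow by (rule flow_prob)
  show "emeasure (distr flow (M \<Otimes>\<^sub>M M) (\<lambda>(x,y). (y,x))) (space M \<times> space M) \<noteq> \<infinity>"
    using F.emeasure_finite by (simp add: emeasure_distr)
qed auto

lemma integral_flow_swap:
  fixes G :: "'a \<times> 'a \<Rightarrow> real"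
  assumes G[measurable]: "G \<in> borel_measurable (M \<Otimes>\<^sub>M M)"
  shows "integral\<^sup>L flow G = (\<integral>z. G (snd z, fst z) \<partial>flow)"
proof -
  have "integral\<^sup>L flow G = integral\<^sup>L (distr flow (M \<Otimes>\<^sub>M M) (\<lambda>(x,y). (y,x))) G"
    by (simp add: flow_swap)
  also have "\<dots> = (\<integral>z. G (snd z, fst z) \<partial>flow)"
    by (subst integral_distr) (auto simp: flow_meas_iff case_prod_beta')
  finally show ?thesis .
qed

lemma integrable_flow_swap:
  fixes G :: "'a \<times> 'a \<Rightarrow> real"
  assumes G[measurable]: "G \<in> borel_measurable (M \<Otimes>\<^sub>M M)" and i: "integrable flow G"
  shows "integrable flow (\<lambda>z. G (snd z, fst z))"
proof -
  have "integrable (distr flow (M \<Otimes>\<^sub>M M) (\<lambda>(x,y). (y,x))) G" using i by (simp add: flow_swap)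
  then show ?thesis
    by (subst (asm) integrable_distr_eq) (auto simp: flow_meas_iff case_prod_beta')
qed

(* By symmetry the second marginal of the flow is mu as well (stationarity). *)
lemma integral_flow_snd:
  fixes F :: "'a \<Rightarrow> real"
  assumes int: "integrable M F"
  shows "integrable flow (\<lambda>z. F (snd z))" "integral\<^sup>L flow (\<lambda>z. F (snd z)) = integral\<^sup>L M F"
proof -
  have F[measurable]: "F \<in> borel_measurable M" using int by auto
  show "integrable flow (\<lambda>z. F (snd z))"
    using integrable_flow_swap[of "\<lambda>z. F (fst z)"] integral_flow_fst[OF int] by simp
  show "integral\<^sup>L flow (\<lambda>z. F (snd z)) = integral\<^sup>L M F"
    using integral_flow_swap[of "\<lambda>z. F (snd z)"] integral_flow_fst[OF int] by simp
qed

lemma integrable_flow_product: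
  assumes f: "f \<in> L2 M" and g: "g \<in> L2 M"
  shows "integrable flow (\<lambda>z. f (fst z) * g (snd z))"
proof (rule Bochner_Integration.integrable_bound)
  have [measurable]: "f \<in> borel_measurable M" "g \<in> borel_measurable M" using L2D f g by auto
  show "integrable flow (\<lambda>z. (f (fst z))\<^sup>2 + (g (snd z))\<^sup>2)"
    using integral_flow_fst(1)[OF L2D(2)[OF f]] integral_flow_snd(1)[OF L2D(2)[OF g]] by simp
  show "(\<lambda>z. f (fst z) * g (snd z)) \<in> borel_measurable flow" by (simp add: flow_meas_iff)
  show "AE z in flow. norm (f (fst z) * g (snd z)) \<le> norm ((f (fst z))\<^sup>2 + (g (snd z))\<^sup>2)"
    using abs_mult_le_sq by auto
qed

lemma inner_kernel_flow:
  assumes f: "f \<in> L2 M" and g: "g \<in> L2 M"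
  shows "inner_mu M f (kernel_apply K g) = (\<integral>z. f (fst z) * g (snd z) \<partial>flow)"
proof -
  have [measurable]: "f \<in> borel_measurable M" "g \<in> borel_measurable M" using L2D f g by auto
  have "(\<integral>z. f (fst z) * g (snd z) \<partial>flow) = (\<integral>x. (\<integral>y. f x * g y \<partial>K x) \<partial>M)"
    using integral_flow[of "\<lambda>z. f (fst z) * g (snd z)"] integrable_flow_product[OF f g] by simp
  also have "\<dots> = inner_mu M f (kernel_apply K g)"
    unfolding inner_mu_def kernel_apply_def by simp
  finally show ?thesis ..
qed

lemma integrable_flow_sq_diff:
  assumes f: "f \<in> L2 M"
  shows "integrable flow (\<lambda>z. (f (fst z) - f (snd z))\<^sup>2)"
proof -
  have "integrable flow (\<lambda>z. (f (fst z))\<^sup>2 + (f (snd z))\<^sup>2 - 2 * (f (fst z) * f (snd z)))"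
    using integral_flow_fst(1)[OF L2D(2)[OF f]] integral_flow_snd(1)[OF L2D(2)[OF f]]
      integrable_flow_product[OF f f] by simp
  then show ?thesis by (simp add: power2_diff algebra_simps)
qed

lemma dirichlet_eq_flow:
  assumes f: "f \<in> L2 M"
  shows "dirichlet M K f = (\<integral>z. (f (fst z) - f (snd z))\<^sup>2 \<partial>flow) / 2"
proof -
  have [measurable]: "f \<in> borel_measurable M" using L2D f by auto
  have i1: "integrable flow (\<lambda>z. (f (fst z))\<^sup>2)" "integrable flow (\<lambda>z. (f (snd z))\<^sup>2)"
    using integral_flow_fst(1)[OF L2D(2)[OF f]] integral_flow_snd(1)[OF L2D(2)[OF f]] .
  have i3: "integrable flow (\<lambda>z. f (fst z) * f (snd z))" by (rule integrable_flow_product[OF f f])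
  have "(\<integral>z. (f (fst z) - f (snd z))\<^sup>2 \<partial>flow)
      = (\<integral>z. (f (fst z))\<^sup>2 + (f (snd z))\<^sup>2 - 2 * (f (fst z) * f (snd z)) \<partial>flow)"
    by (simp add: power2_diff algebra_simps)
  also have "\<dots> = (\<integral>z. (f (fst z))\<^sup>2 \<partial>flow) + (\<integral>z. (f (snd z))\<^sup>2 \<partial>flow)
      - 2 * (\<integral>z. f (fst z) * f (snd z) \<partial>flow)"
    using i1 i3 by simp
  also have "\<dots> = 2 * dirichlet M K f"
    using integral_flow_fst(2)[OF L2D(2)[OF f]] integral_flow_snd(2)[OF L2D(2)[OF f]]
    unfolding dirichlet_def inner_kernel_flow[OF f f] by (simp add: inner_mu_def power2_eq_square)
  finally show ?thesis by simp
qed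

(* Nonnegative definiteness gives E(f) <= (f,f); applied to the centred f this is
   E(f) <= Var(f), since E does not see constants. *)
lemma dirichlet_bounded_K: "dirichlet_bounded M K"
  unfolding dirichlet_bounded_def
proof (intro ballI conjI)
  fix f assume f: "f \<in> L2 M"
  show "0 \<le> dirichlet M K f" by (simp add: dirichlet_eq_flow[OF f])
  define g where "g x = f x - integral\<^sup>L M f" for x
  have g: "g \<in> L2 M" unfolding g_def by (rule L2_diff[OF f L2_const])
  have "dirichlet M K f = dirichlet M K g"
    unfolding dirichlet_eq_flow[OF f] dirichlet_eq_flow[OF g] by (simp add: g_def)
  also have "\<dots> \<le> inner_mu M g g"
    using nnd g unfolding nonneg_definite_def dirichlet_def inner_mu_def by (auto simp: mult.commute)
  also have "\<dots> = var_mu M f"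
    unfolding g_def by (rule inner_centered[OF f])
  finally show "dirichlet M K f \<le> var_mu M f" .
qed

(* The energy of f carried by the pairs weighted by w; with w = 1 this is 2 E(f). *)
definition energy :: "('a \<times> 'a \<Rightarrow> real) \<Rightarrow> ('a \<Rightarrow> real) \<Rightarrow> real" where
  "energy w f = (\<integral>z. w z * (f (fst z) - f (snd z))\<^sup>2 \<partial>flow)"

lemma integrable_energy:
  assumes f: "f \<in> L2 M" and w[measurable]: "w \<in> borel_measurable (M \<Otimes>\<^sub>M M)"
    and wb: "\<And>z. z \<in> space flow \<Longrightarrow> \<bar>w z\<bar> \<le> 1"
  shows "integrable flow (\<lambda>z. w z * (f (fst z) - f (snd z))\<^sup>2)"
proof (rule Bochner_Integration.integrable_bound[OF integrable_flow_sq_diff[OF f]])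
  have [measurable]: "f \<in> borel_measurable M" using L2D[OF f] by simp
  show "(\<lambda>z. w z * (f (fst z) - f (snd z))\<^sup>2) \<in> borel_measurable flow" by (simp add: flow_meas_iff)
  show "AE z in flow. norm (w z * (f (fst z) - f (snd z))\<^sup>2) \<le> norm ((f (fst z) - f (snd z))\<^sup>2)"
    using wb by (intro AE_I2) (auto simp: abs_mult intro!: mult_left_le_one_le)
qed

lemma energy_nonneg: "(\<And>z. z \<in> space flow \<Longrightarrow> 0 \<le> w z) \<Longrightarrow> 0 \<le> energy w f"
  unfolding energy_def by (intro Bochner_Integration.integral_nonneg) auto

definition both_in :: "'a set \<Rightarrow> 'a \<times> 'a \<Rightarrow> real" where
  "both_in B z = indicator B (fst z) * indicator B (snd z)"

lemma both_in_meas[measurable]: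
  assumes [measurable]: "B \<in> sets M" shows "both_in B \<in> borel_measurable (M \<Otimes>\<^sub>M M)"
  unfolding both_in_def by measurable

end

locale kernel_partition = reversible_kernel +
  fixes A :: "nat \<Rightarrow> 'a set" and J :: nat
  assumes A_sets: "\<forall>j<J. A j \<in> sets M" and disj: "disjoint_family_on A {..<J}"
    and cover: "(\<Union>j<J. A j) = space M" and pos: "\<forall>j<J. measure M (A j) > 0"
begin

lemma A_in[measurable]: "j < J \<Longrightarrow> A j \<in> sets M" using A_sets by auto

lemma in_some_block: "x \<in> space M \<Longrightarrow> \<exists>i<J. x \<in> A i" using cover by auto

lemma A_sub: "j < J \<Longrightarrow> A j \<subseteq> space M" using cover by auto

lemma A_disj: "i < J \<Longrightarrow> j < J \<Longrightarrow> x \<in> A i \<Longrightarrow> x \<in> A j \<Longrightarrow> i = j"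
  using disj unfolding disjoint_family_on_def by auto

lemma J_pos: "0 < J"
  using not_empty in_some_block by fastforce

lemma sum_blocks_indicator:
  assumes i: "i < J" "x \<in> A i"
  shows "(\<Sum>j<J. indicator (A j) x * c j) = (c i :: real)"
proof -
  have "(\<Sum>j<J. indicator (A j) x * c j) = (\<Sum>j<J. if j = i then c i else 0)"
    using A_disj i by (intro sum.cong) (auto simp: indicator_def)
  also have "\<dots> = c i" using i by simp
  finally show ?thesis .
qed

definition mass :: "nat \<Rightarrow> real" where "mass j = measure M (A j)"

lemma mass_pos: "j < J \<Longrightarrow> mass j > 0" using pos by (simp add: mass_def)

lemma integral_indicator_const: "j < J \<Longrightarrow> (\<integral>x. indicator (A j) x * c \<partial>M) = mass j * c"
  using A_sub by (simp add: mass_def Int_absorb2)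

lemma integrable_indicator_const: "j < J \<Longrightarrow> integrable M (\<lambda>x. indicator (A j) x * (c::real))"
  by (intro integrable_const_bound[where B="\<bar>c\<bar>"]) (auto simp: indicator_def)

(* The function that is constant g j on the block A j: the embedding of functions
   on the projected state space {..<J} into L2 M. *)
definition block_fun :: "(nat \<Rightarrow> real) \<Rightarrow> 'a \<Rightarrow> real" where
  "block_fun g x = (\<Sum>j<J. indicator (A j) x * g j)"

lemma block_fun_meas[measurable]: "block_fun g \<in> borel_measurable M"
  unfolding block_fun_def by measurable

lemma block_fun_eq: "i < J \<Longrightarrow> x \<in> A i \<Longrightarrow> block_fun g x = g i"
  unfolding block_fun_def by (rule sum_blocks_indicator)

lemma block_fun_L2: "block_fun g \<in> L2 M"
proof -
  have "\<bar>block_fun g x\<bar> \<le> (\<Sum>j<J. \<bar>g j\<bar>)" for x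
    unfolding block_fun_def
    by (rule order_trans[OF sum_abs]) (intro sum_mono, auto simp: indicator_def abs_mult)
  then have "(block_fun g x)\<^sup>2 \<le> (\<Sum>j<J. \<bar>g j\<bar>)\<^sup>2" for x
    by (metis abs_ge_zero power2_abs power_mono)
  then have "integrable M (\<lambda>x. (block_fun g x)\<^sup>2)"
    by (intro integrable_const_bound[where B="(\<Sum>j<J. \<bar>g j\<bar>)\<^sup>2"]) auto
  then show ?thesis unfolding L2_def by simp
qed

lemma inner_block_fun: "inner_mu M (block_fun g) (block_fun h) = (\<Sum>j<J. mass j * (g j * h j))"
proof -
  have "inner_mu M (block_fun g) (block_fun h) = (\<integral>x. (\<Sum>j<J. indicator (A j) x * (g j * h j)) \<partial>M)"
    unfolding inner_mu_def
  proof (rule Bochner_Integration.integral_cong[OF refl])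
    fix x assume "x \<in> space M"
    then obtain i where i: "i < J" "x \<in> A i" using in_some_block by blast
    show "block_fun g x * block_fun h x = (\<Sum>j<J. indicator (A j) x * (g j * h j))"
      using block_fun_eq[OF i] sum_blocks_indicator[OF i] by simp
  qed
  also have "\<dots> = (\<Sum>j<J. mass j * (g j * h j))"
    by (subst Bochner_Integration.integral_sum, rule integrable_indicator_const, simp)
       (rule sum.cong[OF refl], simp add: integral_indicator_const mass_def)
  finally show ?thesis .
qed

lemma integral_block_fun: "integral\<^sup>L M (block_fun g) = (\<Sum>j<J. mass j * g j)"
  unfolding block_fun_def
  by (subst Bochner_Integration.integral_sum, rule integrable_indicator_const, simp)
     (rule sum.cong[OF refl], simp add: integral_indicator_const mass_def)

lemma kernel_apply_block_fun:
  assumes x: "x \<in> space M"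
  shows "kernel_apply K (block_fun h) x = (\<Sum>j<J. h j * measure (K x) (A j))"
proof -
  interpret Q: prob_space "K x" by (rule K_prob[OF x])
  have "integrable (K x) (\<lambda>y. indicator (A j) y * h j)" if j: "j < J" for j
    using j by (intro Q.integrable_const_bound[where B="\<bar>h j\<bar>"])
      (auto simp: indicator_def measurable_cong_sets[OF K_sets[OF x] refl])
  then have "kernel_apply K (block_fun h) x = (\<Sum>j<J. \<integral>y. indicator (A j) y * h j \<partial>K x)"
    unfolding kernel_apply_def block_fun_def by (subst Bochner_Integration.integral_sum) auto
  also have "\<dots> = (\<Sum>j<J. h j * measure (K x) (A j))"
    using A_sub by (intro sum.cong refl) (simp add: K_space[OF x] Int_absorb2)
  finally show ?thesis .
qed

lemma integrable_block_transition:
  "i < J \<Longrightarrow> j < J \<Longrightarrow> integrable M (\<lambda>x. indicator (A i) x * measure (K x) (A j) * c)"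
  using prob_space.prob_le_1[OF K_prob]
  by (intro integrable_const_bound[where B="\<bar>c\<bar>"])
     (auto simp: indicator_def abs_mult intro!: mult_left_le_one_le)

lemma inner_block_fun_kernel:
  "inner_mu M (block_fun g) (kernel_apply K (block_fun h)) =
     (\<Sum>i<J. \<Sum>j<J. (g i * h j) * (LINT x:A i|M. measure (K x) (A j)))"
proof -
  have "inner_mu M (block_fun g) (kernel_apply K (block_fun h)) =
     (\<integral>x. (\<Sum>i<J. \<Sum>j<J. indicator (A i) x * measure (K x) (A j) * (g i * h j)) \<partial>M)"
    unfolding inner_mu_def
  proof (rule Bochner_Integration.integral_cong[OF refl])
    fix x assume x: "x \<in> space M"
    then obtain i where i: "i < J" "x \<in> A i" using in_some_block by blast
    have "(\<Sum>i<J. \<Sum>j<J. indicator (A i) x * measure (K x) (A j) * (g i * h j))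
        = (\<Sum>i<J. indicator (A i) x * (\<Sum>j<J. measure (K x) (A j) * (g i * h j)))"
      by (simp add: sum_distrib_left mult.assoc)
    also have "\<dots> = (\<Sum>j<J. measure (K x) (A j) * (g i * h j))"
      by (rule sum_blocks_indicator[OF i])
    finally show "block_fun g x * kernel_apply K (block_fun h) x =
       (\<Sum>i<J. \<Sum>j<J. indicator (A i) x * measure (K x) (A j) * (g i * h j))"
      using block_fun_eq[OF i] kernel_apply_block_fun[OF x] by (simp add: sum_distrib_left algebra_simps)
  qed
  also have "\<dots> = (\<Sum>i<J. (\<integral>x. (\<Sum>j<J. indicator (A i) x * measure (K x) (A j) * (g i * h j)) \<partial>M))"
    by (intro Bochner_Integration.integral_sum Bochner_Integration.integrable_sum
        integrable_block_transition) auto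
  also have "\<dots> = (\<Sum>i<J. \<Sum>j<J. (\<integral>x. indicator (A i) x * measure (K x) (A j) * (g i * h j) \<partial>M))"
    by (intro sum.cong refl Bochner_Integration.integral_sum integrable_block_transition) auto
  also have "\<dots> = (\<Sum>i<J. \<Sum>j<J. (g i * h j) * (LINT x:A i|M. measure (K x) (A j)))"
    by (simp add: set_lebesgue_integral_def mult.commute)
  finally show ?thesis .
qed

lemma proj_measure_eq: "proj_measure M A J = point_measure {..<J} (\<lambda>j. ennreal (mass j))"
  unfolding proj_measure_def mass_def by (simp add: emeasure_eq_measure)

lemma integral_proj_measure: "integral\<^sup>L (proj_measure M A J) F = (\<Sum>j<J. mass j * F j)"
  unfolding proj_measure_eq by (subst lebesgue_integral_point_measure_finite) (auto simp: mass_def)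

lemma proj_matrix_nonneg: "0 \<le> proj_matrix M K A i j"
  unfolding proj_matrix_def set_lebesgue_integral_def
  by (intro divide_nonneg_nonneg Bochner_Integration.integral_nonneg) (auto simp: indicator_def)

lemma kernel_apply_proj: "kernel_apply (proj_kernel M K A J) h i = (\<Sum>j<J. proj_matrix M K A i j * h j)"
  unfolding kernel_apply_def proj_kernel_def
  by (subst lebesgue_integral_point_measure_finite) (auto simp: proj_matrix_nonneg)

lemma L2_proj: "g \<in> L2 (proj_measure M A J)"
  unfolding L2_def proj_measure_eq by (auto intro: integrable_point_measure_finite)

(* The projection chain is the restriction of (mu, P) to block functions:
   inner products, variances and Dirichlet forms agree. *)
lemma inner_proj: "inner_mu (proj_measure M A J) g h = inner_mu M (block_fun g) (block_fun h)"
  unfolding inner_block_fun by (simp add: inner_mu_def integral_proj_measure)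

lemma var_proj: "var_mu (proj_measure M A J) g = var_mu M (block_fun g)"
  unfolding var_mu_def inner_proj by (simp add: integral_block_fun integral_proj_measure)

lemma inner_proj_kernel: "inner_mu (proj_measure M A J) g (kernel_apply (proj_kernel M K A J) h)
   = inner_mu M (block_fun g) (kernel_apply K (block_fun h))"
proof -
  have "inner_mu (proj_measure M A J) g (kernel_apply (proj_kernel M K A J) h)
     = (\<Sum>i<J. mass i * (g i * (\<Sum>j<J. proj_matrix M K A i j * h j)))"
    unfolding inner_mu_def integral_proj_measure kernel_apply_proj ..
  also have "\<dots> = (\<Sum>i<J. \<Sum>j<J. (g i * h j) * (LINT x:A i|M. measure (K x) (A j)))"
  proof (rule sum.cong[OF refl])
    fix i assume "i \<in> {..<J}"
    then have "mass i \<noteq> 0" using mass_pos by (simp add: less_imp_neq[symmetric])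
    then show "mass i * (g i * (\<Sum>j<J. proj_matrix M K A i j * h j)) =
          (\<Sum>j<J. (g i * h j) * (LINT x:A i|M. measure (K x) (A j)))"
      unfolding proj_matrix_def sum_distrib_left mass_def[symmetric]
      by (intro sum.cong refl) (simp add: field_simps)
  qed
  finally show ?thesis unfolding inner_block_fun_kernel .
qed

lemma dirichlet_proj:
  "dirichlet (proj_measure M A J) (proj_kernel M K A J) g = dirichlet M K (block_fun g)"
  unfolding dirichlet_def by (subst inner_proj_kernel, subst inner_proj, rule refl)

lemma dirichlet_bounded_proj: "dirichlet_bounded (proj_measure M A J) (proj_kernel M K A J)"
  using dirichlet_bounded_K block_fun_L2
  unfolding dirichlet_bounded_def dirichlet_proj var_proj by blast

(* Upper bound: the projection chain sees only block functions, so its gap is at least Gap(P). *)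
lemma gap_le_proj_gap: "gap M K \<le> gap (proj_measure M A J) (proj_kernel M K A J)"
proof (rule le_gapI)
  show "gap M K \<le> 1" by (rule gap_le_one[OF dirichlet_bounded_K])
  fix g
  show "gap M K * var_mu (proj_measure M A J) g \<le> dirichlet (proj_measure M A J) (proj_kernel M K A J) g"
    unfolding dirichlet_proj var_proj by (rule gap_mult_var_le[OF dirichlet_bounded_K block_fun_L2])
qed

end

(* The restricted chain on a single block B of positive mass: the probability measure
   U = mu( . | B) and the kernel R = P|_B, which stays put instead of leaving B. *)
locale kernel_block = reversible_kernel +
  fixes B :: "'a set"
  assumes B_sets[measurable]: "B \<in> sets M" and B_pos: "measure M B > 0"
begin

abbreviation U :: "'a measure" where "U \<equiv> uniform_measure M B"
abbreviation R :: "'a \<Rightarrow> 'a measure" where "R \<equiv> restrict_kernel M K B"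

definition mass_B :: real where "mass_B = measure M B"

lemma mass_B_pos: "mass_B > 0" using B_pos by (simp add: mass_B_def)

lemma emeasure_B: "emeasure M B = ennreal mass_B"
  by (simp add: mass_B_def emeasure_eq_measure)

lemma U_density: "U = density M (\<lambda>x. ennreal (indicator B x / mass_B))"
  unfolding uniform_measure_def emeasure_B using mass_B_pos
  by (intro arg_cong[where f="density M"] ext)
     (auto simp: indicator_def divide_ennreal[of 1 mass_B, simplified])

lemma prob_space_U: "prob_space U"
  by (rule prob_space_uniform_measure) (use mass_B_pos in \<open>auto simp: emeasure_B\<close>)

lemma integral_U:
  fixes F :: "'a \<Rightarrow> real"
  assumes [measurable]: "F \<in> borel_measurable M"
  shows "integral\<^sup>L U F = (\<integral>x. indicator B x * F x \<partial>M) / mass_B"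
  unfolding U_density by (subst integral_density) (auto simp: mass_B_pos less_imp_le)

lemma integrable_U_iff:
  fixes F :: "'a \<Rightarrow> real"
  assumes [measurable]: "F \<in> borel_measurable M"
  shows "integrable U F \<longleftrightarrow> integrable M (\<lambda>x. indicator B x * F x)"
proof -
  have "integrable U F \<longleftrightarrow> integrable M (\<lambda>x. (1 / mass_B) * (indicator B x * F x))"
    unfolding U_density by (subst integrable_density) (auto simp: mass_B_pos less_imp_le)
  also have "\<dots> \<longleftrightarrow> integrable M (\<lambda>x. indicator B x * F x)"
    using mass_B_pos by (subst integrable_mult_left_iff) auto
  finally show ?thesis .
qed

lemma L2_U_meas: "f \<in> L2 U \<Longrightarrow> f \<in> borel_measurable M"
  unfolding L2_def by (simp add: measurable_cong_sets[OF sets_uniform_measure refl])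

lemma L2_cut:
  assumes f: "f \<in> L2 U" shows "(\<lambda>x. indicator B x * f x) \<in> L2 M"
proof -
  have [measurable]: "f \<in> borel_measurable M" by (rule L2_U_meas[OF f])
  have "integrable M (\<lambda>x. indicator B x * (f x)\<^sup>2)"
    using f integrable_U_iff[of "\<lambda>x. (f x)\<^sup>2"] unfolding L2_def by simp
  moreover have "(\<lambda>x. (indicator B x * f x)\<^sup>2) = (\<lambda>x. indicator B x * (f x)\<^sup>2 :: real)"
    by (auto simp: indicator_def)
  ultimately show ?thesis unfolding L2_def by simp
qed

lemma L2_U_of_L2:
  assumes f: "f \<in> L2 M" shows "f \<in> L2 U"
proof -
  have [measurable]: "f \<in> borel_measurable M" using L2D[OF f] by simp
  have "integrable M (\<lambda>x. indicator B x * (f x)\<^sup>2)"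
    using integrable_mult_indicator[OF B_sets L2D(2)[OF f]] by simp
  then show ?thesis using integrable_U_iff[of "\<lambda>x. (f x)\<^sup>2"] unfolding L2_def
    by (simp add: measurable_cong_sets[OF sets_uniform_measure refl])
qed

(* R(x, .) is the image of P(x, .) under the move that rejects every exit from B. *)
definition move :: "'a \<Rightarrow> 'a \<Rightarrow> 'a" where
  "move x y = (if x \<in> B \<and> y \<in> B then y else x)"

lemma move_meas[measurable]: "(\<lambda>z. move (fst z) (snd z)) \<in> M \<Otimes>\<^sub>M M \<rightarrow>\<^sub>M M"
  unfolding move_def by measurable

lemma move_section_meas: "x \<in> space M \<Longrightarrow> move x \<in> K x \<rightarrow>\<^sub>M M"
  using measurable_compose[OF Pair_meas move_meas] by (simp add: comp_def)

lemma restrict_kernel_eq_distr: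
  assumes x: "x \<in> space M"
  shows "R x = distr (K x) M (move x)"
proof -
  interpret Q: prob_space "K x" by (rule K_prob[OF x])
  have B_sub: "B \<subseteq> space M" using sets.sets_into_space[OF B_sets] .
  have "R x = measure_of (space M) (sets M) (emeasure (distr (K x) M (move x)))"
    unfolding restrict_kernel_def
  proof (rule measure_of_eq)
    show "sets M \<subseteq> Pow (space M)" using sets.sets_into_space by auto
    fix C assume "C \<in> sigma_sets (space M) (sets M)"
    then have C: "C \<in> sets M" by (simp add: sets.sigma_sets_eq)
    show "(if x \<in> B then emeasure (K x) (C \<inter> B) + indicator C x * emeasure (K x) (space M - B)
          else indicator C x) = emeasure (distr (K x) M (move x)) C"
    proof (cases "x \<in> B")
      case True
      have eq: "move x -` C \<inter> space (K x) = (C \<inter> B) \<union> (if x \<in> C then space M - B else {})"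
        using True B_sub sets.sets_into_space[OF C]
        by (auto simp: move_def K_space[OF x] split: if_split_asm)
      have "emeasure (K x) ((C \<inter> B) \<union> (if x \<in> C then space M - B else {}))
          = emeasure (K x) (C \<inter> B) + emeasure (K x) (if x \<in> C then space M - B else {})"
        by (rule plus_emeasure[symmetric]) (auto simp: K_sets[OF x] C)
      then show ?thesis using True C
        by (simp add: emeasure_distr move_section_meas[OF x] eq indicator_def)
    next
      case False
      have eq: "move x -` C \<inter> space (K x) = (if x \<in> C then space M else {})"
        using False by (auto simp: move_def K_space[OF x])
      show ?thesis using False C
        by (simp add: emeasure_distr move_section_meas[OF x] eq indicator_def
            sym[OF K_space[OF x]] Q.emeasure_space_1)
    qed
  qed
  also have "\<dots> = distr (K x) M (move x)"
    using measure_of_of_measure[of "distr (K x) M (move x)"] by simp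
  finally show ?thesis .
qed

lemma kernel_apply_restrict:
  assumes x: "x \<in> space M" and f[measurable]: "f \<in> borel_measurable M"
  shows "kernel_apply R f x = (\<integral>y. f (move x y) \<partial>K x)"
  unfolding kernel_apply_def restrict_kernel_eq_distr[OF x]
  by (rule integral_distr[OF move_section_meas[OF x] f])

lemma kernel_apply_restrict_meas:
  assumes f[measurable]: "f \<in> borel_measurable M"
  shows "kernel_apply R f \<in> borel_measurable M"
proof -
  have "(\<lambda>x. \<integral>y. f (move x y) \<partial>K x) \<in> borel_measurable M"
    using integral_K_meas[of "\<lambda>z. f (move (fst z) (snd z))"] by simp
  then show ?thesis
    by (rule measurable_cong[THEN iffD1, rotated]) (simp add: kernel_apply_restrict)
qed

lemma integrable_cut_terms:
  assumes g: "g \<in> L2 M"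
  shows "integrable flow (\<lambda>z. (g (fst z))\<^sup>2)" "integrable flow (\<lambda>z. g (fst z) * g (snd z))"
    "integrable flow (\<lambda>z. (g (fst z))\<^sup>2 * indicator (space M - B) (snd z))"
proof -
  have [measurable]: "g \<in> borel_measurable M" using L2D[OF g] by simp
  show i1: "integrable flow (\<lambda>z. (g (fst z))\<^sup>2)" by (rule integral_flow_fst(1)[OF L2D(2)[OF g]])
  show "integrable flow (\<lambda>z. g (fst z) * g (snd z))" by (rule integrable_flow_product[OF g g])
  show "integrable flow (\<lambda>z. (g (fst z))\<^sup>2 * indicator (space M - B) (snd z))"
    by (rule Bochner_Integration.integrable_bound[OF i1]) (auto simp: flow_meas_iff indicator_def)
qed

lemma inner_U_flow:
  assumes f: "f \<in> L2 U"
  defines "g \<equiv> \<lambda>x. indicator B x * f x"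
  shows "mass_B * inner_mu U f f = (\<integral>z. (g (fst z))\<^sup>2 \<partial>flow)"
proof -
  have [measurable]: "f \<in> borel_measurable M" by (rule L2_U_meas[OF f])
  have "mass_B * inner_mu U f f = (\<integral>x. indicator B x * (f x * f x) \<partial>M)"
    unfolding inner_mu_def using mass_B_pos by (subst integral_U) auto
  also have "\<dots> = (\<integral>x. (g x)\<^sup>2 \<partial>M)"
    by (intro Bochner_Integration.integral_cong refl) (simp add: g_def indicator_def power2_eq_square)
  also have "\<dots> = (\<integral>z. (g (fst z))\<^sup>2 \<partial>flow)"
    using integral_flow_fst(2)[OF L2D(2)[OF L2_cut[OF f]]] by (simp add: g_def)
  finally show ?thesis .
qed

(* A step of R from x in B either follows P inside B or stays at x. *)
lemma inner_U_restrict_flow: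
  assumes f: "f \<in> L2 U"
  defines "g \<equiv> \<lambda>x. indicator B x * f x"
  shows "mass_B * inner_mu U f (kernel_apply R f) = (\<integral>z. g (fst z) * g (snd z) \<partial>flow)
     + (\<integral>z. (g (fst z))\<^sup>2 * indicator (space M - B) (snd z) \<partial>flow)"
proof -
  have [measurable]: "f \<in> borel_measurable M" by (rule L2_U_meas[OF f])
  have "g \<in> L2 M" unfolding g_def by (rule L2_cut[OF f])
  note I = integrable_cut_terms[OF this]
  define H where "H z = indicator B (fst z) * f (fst z) * f (move (fst z) (snd z))" for z
  have [measurable]: "H \<in> borel_measurable (M \<Otimes>\<^sub>M M)" unfolding H_def by measurable
  have H_eq: "H z = g (fst z) * g (snd z) + (g (fst z))\<^sup>2 * indicator (space M - B) (snd z)"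
    if "z \<in> space flow" for z
    using that by (cases z) (auto simp: H_def g_def move_def indicator_def power2_eq_square space_flow)
  have "mass_B * inner_mu U f (kernel_apply R f)
      = (\<integral>x. indicator B x * (f x * kernel_apply R f x) \<partial>M)"
    unfolding inner_mu_def using mass_B_pos
    by (subst integral_U) (auto intro!: borel_measurable_times kernel_apply_restrict_meas)
  also have "\<dots> = (\<integral>x. (\<integral>y. H (x,y) \<partial>K x) \<partial>M)"
    by (intro Bochner_Integration.integral_cong refl) (simp add: kernel_apply_restrict H_def)
  also have "\<dots> = integral\<^sup>L flow H"
    using I by (intro integral_flow[symmetric])
      (auto simp: H_eq cong: Bochner_Integration.integrable_cong)
  also have "\<dots> = (\<integral>z. g (fst z) * g (snd z) + (g (fst z))\<^sup>2 * indicator (space M - B) (snd z) \<partial>flow)"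
    by (rule Bochner_Integration.integral_cong) (simp_all add: H_eq)
  finally show ?thesis using I by simp
qed

(* The restricted Dirichlet form: mass_B * E_U(f) = within-B energy / 2.  The flow out of B
   and back cancels by reversibility. *)
lemma energy_both_in:
  assumes f: "f \<in> L2 U"
  shows "energy (both_in B) f = 2 * (mass_B * dirichlet U R f)"
proof -
  define g where "g x = indicator B x * f x" for x
  have [measurable]: "f \<in> borel_measurable M" by (rule L2_U_meas[OF f])
  have "g \<in> L2 M" unfolding g_def by (rule L2_cut[OF f])
  note I = integrable_cut_terms[OF this]
  define I1 :: "'a \<times> 'a \<Rightarrow> real" where "I1 z = (g (fst z))\<^sup>2" for z
  define I2 :: "'a \<times> 'a \<Rightarrow> real" where "I2 z = (g (fst z))\<^sup>2 * indicator (space M - B) (snd z)" for z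
  define I3 :: "'a \<times> 'a \<Rightarrow> real" where "I3 z = g (fst z) * g (snd z)" for z
  have [measurable]: "I1 \<in> borel_measurable (M \<Otimes>\<^sub>M M)" "I2 \<in> borel_measurable (M \<Otimes>\<^sub>M M)"
    "I3 \<in> borel_measurable (M \<Otimes>\<^sub>M M)" unfolding I1_def I2_def I3_def g_def by measurable
  have i: "integrable flow I1" "integrable flow (\<lambda>z. I1 (snd z, fst z))"
    "integrable flow I2" "integrable flow (\<lambda>z. I2 (snd z, fst z))" "integrable flow I3"
    using I integrable_flow_swap[of I1] integrable_flow_swap[of I2]
    unfolding I1_def I2_def I3_def by auto
  have eq: "both_in B z * (f (fst z) - f (snd z))\<^sup>2
      = I1 z - I2 z + I1 (snd z, fst z) - I2 (snd z, fst z) - 2 * I3 z" if "z \<in> space flow" for z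
    using that by (cases z) (auto simp: both_in_def I1_def I2_def I3_def g_def indicator_def
        power2_eq_square algebra_simps space_flow)
  have "energy (both_in B) f = (\<integral>z. I1 z - I2 z + I1 (snd z, fst z) - I2 (snd z, fst z) - 2 * I3 z \<partial>flow)"
    unfolding energy_def by (rule Bochner_Integration.integral_cong) (simp_all add: eq)
  also have "\<dots> = 2 * (integral\<^sup>L flow I1 - integral\<^sup>L flow I3 - integral\<^sup>L flow I2)"
    using i integral_flow_swap[of I1] integral_flow_swap[of I2] by simp
  also have "\<dots> = 2 * (mass_B * dirichlet U R f)"
    using inner_U_flow[OF f] inner_U_restrict_flow[OF f]
    unfolding I1_def I2_def I3_def g_def dirichlet_def by (simp add: right_diff_distrib)
  finally show ?thesis .
qed

(* The restricted chain inherits 0 <= E <= Var: nonnegativity from the energy formula,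
   the upper bound from nonnegative definiteness of P applied to the cut centred f. *)
lemma dirichlet_bounded_U: "dirichlet_bounded U R"
  unfolding dirichlet_bounded_def
proof (intro ballI conjI)
  fix f assume f: "f \<in> L2 U"
  have "0 \<le> energy (both_in B) f"
    by (rule energy_nonneg) (auto simp: both_in_def)
  then show "0 \<le> dirichlet U R f"
    using energy_both_in[OF f] mass_B_pos by (simp add: zero_le_mult_iff)
  define f' where "f' x = f x - integral\<^sup>L U f" for x
  have f': "f' \<in> L2 U" unfolding f'_def by (rule L2_diff[OF f prob_space.L2_const[OF prob_space_U]])
  have "energy (both_in B) f' = energy (both_in B) f" unfolding energy_def f'_def by simp
  then have same: "dirichlet U R f' = dirichlet U R f"
    using energy_both_in[OF f] energy_both_in[OF f'] mass_B_pos by simp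
  define g where "g x = indicator B x * f' x" for x
  have g: "g \<in> L2 M" unfolding g_def by (rule L2_cut[OF f'])
  have "0 \<le> (\<integral>z. g (fst z) * g (snd z) \<partial>flow)"
    using nnd g inner_kernel_flow[OF g g] unfolding nonneg_definite_def inner_mu_def
    by (auto simp: mult.commute)
  moreover have "0 \<le> (\<integral>z. (g (fst z))\<^sup>2 * indicator (space M - B) (snd z) \<partial>flow)"
    by (intro Bochner_Integration.integral_nonneg) auto
  moreover have "mass_B * inner_mu U f' f' = (\<integral>z. (g (fst z))\<^sup>2 \<partial>flow)"
    unfolding g_def by (rule inner_U_flow[OF f'])
  moreover have "mass_B * inner_mu U f' (kernel_apply R f') = (\<integral>z. g (fst z) * g (snd z) \<partial>flow)
     + (\<integral>z. (g (fst z))\<^sup>2 * indicator (space M - B) (snd z) \<partial>flow)"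
    unfolding g_def by (rule inner_U_restrict_flow[OF f'])
  ultimately have "mass_B * dirichlet U R f' \<le> mass_B * inner_mu U f' f'"
    unfolding dirichlet_def right_diff_distrib by linarith
  moreover have "inner_mu U f' f' = var_mu U f"
    unfolding f'_def by (rule prob_space.inner_centered[OF prob_space_U f])
  ultimately show "dirichlet U R f \<le> var_mu U f"
    using mass_B_pos same by simp
qed

lemma var_U:
  assumes f: "f \<in> L2 M"
  shows "mass_B * var_mu U f = (\<integral>x. indicator B x * (f x)\<^sup>2 \<partial>M)
           - (\<integral>x. indicator B x * f x \<partial>M)\<^sup>2 / mass_B"
proof -
  have [measurable]: "f \<in> borel_measurable M" using L2D[OF f] by simp
  have "mass_B * var_mu U f = mass_B * ((\<integral>x. indicator B x * (f x * f x) \<partial>M) / mass_B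
      - ((\<integral>x. indicator B x * f x \<partial>M) / mass_B)\<^sup>2)"
    unfolding var_mu_def inner_mu_def by (subst integral_U, simp)+ simp
  also have "\<dots> = (\<integral>x. indicator B x * (f x)\<^sup>2 \<partial>M) - (\<integral>x. indicator B x * f x \<partial>M)\<^sup>2 / mass_B"
    using mass_B_pos by (simp add: power2_eq_square field_simps)
  finally show ?thesis .
qed

end

context kernel_partition
begin

lemma kernel_block_A: "j < J \<Longrightarrow> kernel_block M K (A j)"
  unfolding kernel_block_def kernel_block_axioms_def using reversible_kernel_axioms pos A_in by auto

definition same_block :: "'a \<times> 'a \<Rightarrow> real" where
  "same_block z = (\<Sum>j<J. both_in (A j) z)"

lemma same_block_meas[measurable]: "same_block \<in> borel_measurable (M \<Otimes>\<^sub>M M)"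
  unfolding same_block_def by measurable

lemma same_block_cases:
  assumes z: "z \<in> space flow"
  shows "(same_block z = 1 \<and> block_fun c (fst z) = block_fun c (snd z)) \<or> same_block z = 0"
proof -
  obtain x y where xy: "z = (x,y)" "x \<in> space M" "y \<in> space M" using z by (auto simp: space_flow)
  obtain i where i: "i < J" "x \<in> A i" using in_some_block[OF xy(2)] by blast
  obtain k where k: "k < J" "y \<in> A k" using in_some_block[OF xy(3)] by blast
  have W: "same_block z = indicator (A i) y"
    unfolding same_block_def both_in_def xy
    using sum_blocks_indicator[OF i, of "\<lambda>j. indicator (A j) y"] by simp
  show ?thesis
    using W block_fun_eq[OF i] block_fun_eq[OF i(1)] xy by (cases "y \<in> A i") auto
qed

lemma same_block_01: "z \<in> space flow \<Longrightarrow> 0 \<le> same_block z \<and> same_block z \<le> 1"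
  using same_block_cases[of z "\<lambda>_. 0"] by auto

lemma dirichlet_split:
  assumes f: "f \<in> L2 M"
  shows "dirichlet M K f = energy same_block f / 2 + energy (\<lambda>z. 1 - same_block z) f / 2"
proof -
  have "(\<integral>z. (f (fst z) - f (snd z))\<^sup>2 \<partial>flow) =
     (\<integral>z. same_block z * (f (fst z) - f (snd z))\<^sup>2 + (1 - same_block z) * (f (fst z) - f (snd z))\<^sup>2 \<partial>flow)"
    by (rule Bochner_Integration.integral_cong) (simp_all add: algebra_simps)
  also have "\<dots> = energy same_block f + energy (\<lambda>z. 1 - same_block z) f"
    unfolding energy_def using same_block_01
    by (intro Bochner_Integration.integral_add integrable_energy[OF f]) auto
  finally show ?thesis unfolding dirichlet_eq_flow[OF f] by simp
qed

lemma dirichlet_block_fun: "dirichlet M K (block_fun c) = energy (\<lambda>z. 1 - same_block z) (block_fun c) / 2"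
proof -
  have "(\<integral>z. (block_fun c (fst z) - block_fun c (snd z))\<^sup>2 \<partial>flow) = energy (\<lambda>z. 1 - same_block z) (block_fun c)"
    unfolding energy_def using same_block_cases[of _ c]
    by (intro Bochner_Integration.integral_cong refl) auto
  then show ?thesis unfolding dirichlet_eq_flow[OF block_fun_L2] by simp
qed

lemma energy_same_block_shift: "energy same_block (\<lambda>x. f x - block_fun c x) = energy same_block f"
  unfolding energy_def
proof (rule Bochner_Integration.integral_cong[OF refl])
  fix z assume "z \<in> space flow"
  then show "same_block z * (f (fst z) - block_fun c (fst z) - (f (snd z) - block_fun c (snd z)))\<^sup>2
      = same_block z * (f (fst z) - f (snd z))\<^sup>2"
    using same_block_cases[of z c] by auto
qed

lemma energy_same_block_sum:
  assumes f: "f \<in> L2 M" shows "energy same_block f = (\<Sum>j<J. energy (both_in (A j)) f)"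
proof -
  have i: "integrable flow (\<lambda>z. both_in (A j) z * (f (fst z) - f (snd z))\<^sup>2)" if "j < J" for j
    using that by (intro integrable_energy[OF f]) (auto simp: both_in_def indicator_def)
  have "energy same_block f = (\<integral>z. (\<Sum>j<J. both_in (A j) z * (f (fst z) - f (snd z))\<^sup>2) \<partial>flow)"
    unfolding energy_def same_block_def by (simp only: sum_distrib_right)
  also have "\<dots> = (\<Sum>j<J. energy (both_in (A j)) f)"
    unfolding energy_def by (rule Bochner_Integration.integral_sum) (use i in auto)
  finally show ?thesis .
qed

(* The convexity estimate for the crossing energy: for every t,
   t(1-t) |a - b|^2 <= (1-t) a^2 + t b^2 applied to the increments of f and f - block_fun c. *)
lemma crossing_convexity:
  assumes f: "f \<in> L2 M"
  shows "t * (1 - t) * energy (\<lambda>z. 1 - same_block z) (block_fun c) \<le>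
     (1 - t) * energy (\<lambda>z. 1 - same_block z) f + t * energy (\<lambda>z. 1 - same_block z) (\<lambda>x. f x - block_fun c x)"
proof -
  define w where "w z = 1 - same_block z" for z
  define D where "D F z = w z * (F (fst z) - F (snd z))\<^sup>2" for F z
  have h: "(\<lambda>x. f x - block_fun c x) \<in> L2 M" by (rule L2_diff[OF f block_fun_L2])
  have int: "integrable flow (D F)" if "F \<in> L2 M" for F
    unfolding D_def w_def using same_block_01
    by (intro integrable_energy[OF that]) (auto simp: abs_le_iff)
  have "(\<integral>z. t * (1 - t) * D (block_fun c) z \<partial>flow)
      \<le> (\<integral>z. (1 - t) * D f z + t * D (\<lambda>x. f x - block_fun c x) z \<partial>flow)"
  proof (rule integral_mono)
    fix z assume z: "z \<in> space flow"
    have sq: "t * (1 - t) * (X - Y)\<^sup>2 \<le> (1 - t) * X\<^sup>2 + t * Y\<^sup>2" for X Y :: real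
    proof -
      have "(1 - t) * X\<^sup>2 + t * Y\<^sup>2 - t * (1 - t) * (X - Y)\<^sup>2 = ((1 - t) * X + t * Y)\<^sup>2"
        by (simp add: power2_eq_square algebra_simps)
      then show ?thesis by (metis diff_ge_0_iff_ge zero_le_power2)
    qed
    let ?X = "f (fst z) - f (snd z)"
    let ?Y = "f (fst z) - block_fun c (fst z) - (f (snd z) - block_fun c (snd z))"
    have XY: "?X - ?Y = block_fun c (fst z) - block_fun c (snd z)" by simp
    have w: "0 \<le> w z" using same_block_01[OF z] by (simp add: w_def)
    have "w z * (t * (1 - t) * (block_fun c (fst z) - block_fun c (snd z))\<^sup>2)
        \<le> w z * ((1 - t) * ?X\<^sup>2 + t * ?Y\<^sup>2)"
      using mult_left_mono[OF sq[of ?X ?Y, unfolded XY] w] .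
    then show "t * (1 - t) * D (block_fun c) z \<le> (1 - t) * D f z + t * D (\<lambda>x. f x - block_fun c x) z"
      unfolding D_def by (simp add: algebra_simps)
  qed (use int[OF block_fun_L2] int[OF f] int[OF h] in auto)
  then show ?thesis
    using int[OF f] int[OF h] unfolding energy_def D_def w_def by simp
qed

definition block_int :: "nat \<Rightarrow> ('a \<Rightarrow> real) \<Rightarrow> real" where
  "block_int j F = (\<integral>x. indicator (A j) x * F x \<partial>M)"

lemma sum_block_int:
  assumes F: "integrable M F" shows "integral\<^sup>L M F = (\<Sum>j<J. block_int j F)"
proof -
  have "integral\<^sup>L M F = (\<integral>x. (\<Sum>j<J. indicator (A j) x * F x) \<partial>M)"
  proof (rule Bochner_Integration.integral_cong[OF refl])
    fix x assume "x \<in> space M"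
    then obtain i where i: "i < J" "x \<in> A i" using in_some_block by blast
    show "F x = (\<Sum>j<J. indicator (A j) x * F x)"
      using sum_blocks_indicator[OF i, of "\<lambda>_. F x"] by simp
  qed
  also have "\<dots> = (\<Sum>j<J. block_int j F)" unfolding block_int_def
    using integrable_mult_indicator[OF A_in F] by (subst Bochner_Integration.integral_sum) auto
  finally show ?thesis .
qed

definition block_mean :: "('a \<Rightarrow> real) \<Rightarrow> nat \<Rightarrow> real" where
  "block_mean f j = block_int j f / mass j"

definition within_var :: "('a \<Rightarrow> real) \<Rightarrow> real" where
  "within_var f = (\<Sum>j<J. mass j * var_mu (uniform_measure M (A j)) f)"

lemma within_var_eq:
  assumes f: "f \<in> L2 M"
  shows "within_var f = (\<Sum>j<J. block_int j (\<lambda>x. (f x)\<^sup>2) - (block_int j f)\<^sup>2 / mass j)"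
proof (unfold within_var_def, intro sum.cong refl)
  fix j assume "j \<in> {..<J}"
  then interpret Bj: kernel_block M K "A j" by (intro kernel_block_A) simp
  show "mass j * var_mu (uniform_measure M (A j)) f = block_int j (\<lambda>x. (f x)\<^sup>2) - (block_int j f)\<^sup>2 / mass j"
    using Bj.var_U[OF f] unfolding Bj.mass_B_def mass_def block_int_def .
qed

lemma var_decomposition:
  assumes f: "f \<in> L2 M"
  shows "var_mu M f = within_var f + var_mu (proj_measure M A J) (block_mean f)"
proof -
  have mass0: "j < J \<Longrightarrow> mass j \<noteq> 0" for j using mass_pos[of j] by simp
  have "var_mu (proj_measure M A J) (block_mean f)
      = (\<Sum>j<J. mass j * (block_mean f j * block_mean f j)) - (\<Sum>j<J. mass j * block_mean f j)\<^sup>2"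
    unfolding var_proj unfolding var_mu_def inner_block_fun integral_block_fun ..
  also have "\<dots> = (\<Sum>j<J. (block_int j f)\<^sup>2 / mass j) - (\<Sum>j<J. block_int j f)\<^sup>2"
    using mass0 by (simp add: block_mean_def power2_eq_square)
  finally show ?thesis
    unfolding within_var_eq[OF f] var_mu_def inner_mu_def
    using sum_block_int[OF L2D(2)[OF f]] sum_block_int[OF L2_integrable[OF f]]
    by (simp add: sum_subtractf power2_eq_square)
qed

lemma residual_norm:
  assumes f: "f \<in> L2 M"
  defines "h \<equiv> \<lambda>x. f x - block_fun (block_mean f) x"
  shows "inner_mu M h h = within_var f"
proof -
  have h: "h \<in> L2 M" unfolding h_def by (rule L2_diff[OF f block_fun_L2])
  have block: "block_int j (\<lambda>x. (h x)\<^sup>2) = block_int j (\<lambda>x. (f x)\<^sup>2) - (block_int j f)\<^sup>2 / mass j"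
    if j: "j < J" for j
  proof -
    let ?c = "block_mean f j"
    have "block_int j (\<lambda>x. (h x)\<^sup>2) =
      (\<integral>x. indicator (A j) x * (f x)\<^sup>2 - 2 * ?c * (indicator (A j) x * f x) + indicator (A j) x * ?c\<^sup>2 \<partial>M)"
      unfolding block_int_def h_def using block_fun_eq[OF j]
      by (intro Bochner_Integration.integral_cong refl) (auto simp: indicator_def power2_diff)
    also have "\<dots> = block_int j (\<lambda>x. (f x)\<^sup>2) - 2 * ?c * block_int j f + ?c\<^sup>2 * mass j"
      using integrable_mult_indicator[OF A_in[OF j] L2D(2)[OF f]]
        integrable_mult_indicator[OF A_in[OF j] L2_integrable[OF f]]
        integrable_indicator_const[OF j] integral_indicator_const[OF j, of "?c\<^sup>2"]
      unfolding block_int_def by (simp add: mult.commute)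
    finally show ?thesis
      using mass_pos[OF j] by (simp add: block_mean_def power2_eq_square field_simps)
  qed
  have "inner_mu M h h = (\<Sum>j<J. block_int j (\<lambda>x. (h x)\<^sup>2))"
    unfolding inner_mu_def using sum_block_int[OF L2D(2)[OF h]] by (simp add: power2_eq_square)
  also have "\<dots> = within_var f"
    unfolding within_var_eq[OF f] using block by (intro sum.cong) auto
  finally show ?thesis .
qed

abbreviation block_gap :: "nat \<Rightarrow> real" where
  "block_gap j \<equiv> gap (uniform_measure M (A j)) (restrict_kernel M K (A j))"

abbreviation proj_gap :: real where
  "proj_gap \<equiv> gap (proj_measure M A J) (proj_kernel M K A J)"

lemma block_gap_01: "j < J \<Longrightarrow> 0 \<le> block_gap j \<and> block_gap j \<le> 1"
  using kernel_block.dirichlet_bounded_U[OF kernel_block_A] gap_nonneg gap_le_one by blast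

lemma min_block_gap_01:
  "0 \<le> Min (block_gap ` {..<J}) \<and> Min (block_gap ` {..<J}) \<le> 1"
proof -
  have "Min (block_gap ` {..<J}) \<in> block_gap ` {..<J}"
    using J_pos by (intro Min_in) auto
  then show ?thesis using block_gap_01 by auto
qed

lemma min_block_gap_within:
  assumes f: "f \<in> L2 M"
  shows "Min (block_gap ` {..<J}) * within_var f \<le> energy same_block f / 2"
proof -
  have "Min (block_gap ` {..<J}) * (mass j * var_mu (uniform_measure M (A j)) f)
      \<le> energy (both_in (A j)) f / 2" if j: "j < J" for j
  proof -
    interpret Bj: kernel_block M K "A j" by (rule kernel_block_A[OF j])
    have fU: "f \<in> L2 (uniform_measure M (A j))" by (rule Bj.L2_U_of_L2[OF f])
    have v0: "0 \<le> var_mu (uniform_measure M (A j)) f"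
      using Bj.dirichlet_bounded_U fU unfolding dirichlet_bounded_def by force
    have "Min (block_gap ` {..<J}) * var_mu (uniform_measure M (A j)) f
        \<le> block_gap j * var_mu (uniform_measure M (A j)) f"
      using j v0 by (intro mult_right_mono Min_le) auto
    also have "\<dots> \<le> dirichlet (uniform_measure M (A j)) (restrict_kernel M K (A j)) f"
      by (rule gap_mult_var_le[OF Bj.dirichlet_bounded_U fU])
    finally show ?thesis
      using Bj.energy_both_in[OF fU] mass_pos[OF j] unfolding Bj.mass_B_def mass_def[symmetric]
      by (simp add: mult.left_commute)
  qed
  then show ?thesis
    unfolding within_var_def energy_same_block_sum[OF f] sum_distrib_left sum_divide_distrib
    by (intro sum_mono) auto
qed

(* Estimate on the residual h: its within-block energy is that of f, and its
   Dirichlet form is at most its squared norm, the within variance. *)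
lemma residual_energy:
  assumes f: "f \<in> L2 M"
  defines "h \<equiv> \<lambda>x. f x - block_fun (block_mean f) x"
  shows "energy same_block f / 2 + energy (\<lambda>z. 1 - same_block z) h / 2 \<le> within_var f"
proof -
  have hL: "h \<in> L2 M" unfolding h_def by (rule L2_diff[OF f block_fun_L2])
  have "energy same_block f / 2 + energy (\<lambda>z. 1 - same_block z) h / 2 = dirichlet M K h"
    using dirichlet_split[OF hL] energy_same_block_shift[of f "block_mean f"]
    unfolding h_def by simp
  also have "\<dots> \<le> var_mu M h"
    using dirichlet_bounded_K hL unfolding dirichlet_bounded_def by blast
  also have "\<dots> \<le> inner_mu M h h" unfolding var_mu_def by simp
  also have "\<dots> = within_var f" unfolding h_def by (rule residual_norm[OF f])
  finally show ?thesis .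
qed

lemma lower_bound:
  assumes f: "f \<in> L2 M"
  shows "proj_gap / 2 * Min (block_gap ` {..<J}) * var_mu M f \<le> dirichlet M K f"
proof -
  define m where "m = block_mean f"
  define h where "h x = f x - block_fun m x" for x
  let ?cross = "energy (\<lambda>z. 1 - same_block z)"
  have "proj_gap * Min (block_gap ` {..<J}) / 2 * (within_var f + var_mu (proj_measure M A J) m)
      \<le> energy same_block f / 2 + ?cross f / 2"
  proof (rule gap_combination_inequality)
    show "0 \<le> proj_gap" "proj_gap \<le> 1"
      using gap_nonneg gap_le_one dirichlet_bounded_proj by blast+
    show "0 \<le> Min (block_gap ` {..<J})" "Min (block_gap ` {..<J}) \<le> 1"
      using min_block_gap_01 by auto
    show "0 \<le> ?cross f / 2" "0 \<le> ?cross h / 2" "0 \<le> energy same_block f / 2"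
      using same_block_01 by (auto intro!: energy_nonneg)
    show "energy same_block f / 2 + ?cross h / 2 \<le> within_var f"
      unfolding h_def m_def by (rule residual_energy[OF f])
    show "proj_gap * var_mu (proj_measure M A J) m \<le> ?cross (block_fun m) / 2"
      using gap_mult_var_le[OF dirichlet_bounded_proj L2_proj]
      unfolding dirichlet_proj dirichlet_block_fun .
    show "Min (block_gap ` {..<J}) * within_var f \<le> energy same_block f / 2"
      by (rule min_block_gap_within[OF f])
    show "t * (1 - t) * (?cross (block_fun m) / 2) \<le> (1 - t) * (?cross f / 2) + t * (?cross h / 2)" for t
      using crossing_convexity[OF f, of t m] unfolding h_def by simp
  qed
  then show ?thesis
    unfolding var_decomposition[OF f] dirichlet_split[OF f] m_def by (simp add: mult_ac)
qed

end

theorem theorem5p2: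
  fixes M :: "'a measure" and K :: "'a \<Rightarrow> 'a measure"
    and A :: "nat \<Rightarrow> 'a set" and J :: nat
  assumes "prob_space M"
    and "countably_generated M"
    and "markov_kernel M K"
    and "reversible M K"
    and "nonneg_definite M K"
    and "\<forall>j<J. A j \<in> sets M"
    and "disjoint_family_on A {..<J}"
    and "(\<Union>j<J. A j) = space M"
    and "\<forall>j<J. measure M (A j) > 0"
  shows "gap (proj_measure M A J) (proj_kernel M K A J) / 2
           * Min ((\<lambda>j. gap (uniform_measure M (A j)) (restrict_kernel M K (A j))) ` {..<J})
         \<le> gap M K
       \<and> gap M K \<le> gap (proj_measure M A J) (proj_kernel M K A J)"
proof -
  interpret kernel_partition M K A J
    using assms(1,3-9)
    by (intro kernel_partition.intro reversible_kernel.intro prob_kernel.intro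
        kernel_partition_axioms.intro reversible_kernel_axioms.intro prob_kernel_axioms.intro)
  have "proj_gap / 2 * Min (block_gap ` {..<J}) \<le> 1"
  proof -
    have "0 \<le> proj_gap" "proj_gap \<le> 1"
      using gap_nonneg gap_le_one dirichlet_bounded_proj by blast+
    then show ?thesis using min_block_gap_01 mult_mono[of proj_gap 1 "Min (block_gap ` {..<J})" 1]
      by auto
  qed
  then have "proj_gap / 2 * Min (block_gap ` {..<J}) \<le> gap M K"
    using lower_bound by (rule le_gapI)
  then show ?thesis using gap_le_proj_gap by simp
qed

end
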